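(* Let $\gamma>0$, $b>0$, $u_{max}>0$, $i_0\in[0,1]$, and let $\beta$ be a bounded nonnegative (measurable) function of time. For a deadline $T>0$, consider the problem of minimizing $J(u)=-i(T)+\int_0^T b\,u^2(t)\,dt$ over Lebesgue integrable $u$ with $0\le u(t)\le u_{max}$, subject to $\dot i(t) = -\beta(t) i^2(t) + (\beta(t)-\gamma-u(t)) i(t) + u(t)$, $i(0)=i_0$, $0\le i(t)\le 1$. The optimality system (from Pontryagin's Maximum Principle) for this problem consists of the state equation above together with the adjoint equation $$\dot\lambda(t) = 2\beta(t)\, i(t)\,\lambda(t) - \big(\beta(t)-\gamma-u(t)\big)\lambda(t),\qquad \lambda(T)=1,$$ and the control characterization $$u(t)=\min\Big\{\max\Big\{\tfrac{\lambda(t)(1-i(t))}{2b},\,0\Big\},\,u_{max}\Big\}.$$ Then for a sufficiently small campaign deadline $T$, the state and adjoint trajectories $(i,\lambda)$ at the optimum (i.e. the solution of this optimality system) and the optimal control $u$ are unique.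
   Context: Controlled SIS information epidemic: $i(t)$ is the fraction of informed individuals, $\beta(t)$ the effective spreading rate, $\gamma$ the recovery rate, $u(t)$ the direct recruitment control, $\lambda(t)$ the adjoint variable. *)

theory Defs
  imports "HOL-Analysis.Analysis"
begin

text \<open>Optimality system (state eq., adjoint eq., control characterization) on [0,T],
  with the ODEs understood in the Caratheodory (integral) sense since beta is only measurable.\<close>
definition optimality_system ::
  "real \<Rightarrow> real \<Rightarrow> real \<Rightarrow> real \<Rightarrow> (real \<Rightarrow> real) \<Rightarrow> real \<Rightarrow>
   (real \<Rightarrow> real) \<Rightarrow> (real \<Rightarrow> real) \<Rightarrow> (real \<Rightarrow> real) \<Rightarrow> bool" where
  "optimality_system \<gamma> b umax i0 \<beta> T i lam u \<longleftrightarrow>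
     (\<forall>t\<in>{0..T}. u t = min (max (lam t * (1 - i t) / (2 * b)) 0) umax) \<and>
     (\<forall>t\<in>{0..T}. 0 \<le> i t \<and> i t \<le> 1) \<and>
     i 0 = i0 \<and> lam T = 1 \<and>
     (\<forall>t\<in>{0..T}. ((\<lambda>s. - \<beta> s * (i s)^2 + (\<beta> s - \<gamma> - u s) * i s + u s)
                      has_integral (i t - i0)) {0..t}) \<and>
     (\<forall>t\<in>{0..T}. ((\<lambda>s. 2 * \<beta> s * i s * lam s - (\<beta> s - \<gamma> - u s) * lam s)
                      has_integral (1 - lam t)) {t..T})"

end

theory Submission
  imports Defs
begin

text \<open>Both solutions live in a bounded region (\<open>0 \<le> i \<le> 1\<close>, \<open>0 \<le> u \<le> umax\<close>, and \<open>\<bar>\<lambda>\<bar> \<le> 2\<close>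
  once \<open>T\<close> is small), where the right-hand sides of the state and adjoint equations and the
  clipped control law are Lipschitz. Writing \<open>D\<close> for the sup over \<open>[0,T]\<close> of
  \<open>\<bar>i\<^sub>1 - i\<^sub>2\<bar> + \<bar>\<lambda>\<^sub>1 - \<lambda>\<^sub>2\<bar>\<close>, integrating the difference of the equations from \<open>0\<close>
  (state) or back from \<open>T\<close> (adjoint) gives \<open>D \<le> K T D\<close> for a constant \<open>K\<close>, so \<open>D = 0\<close>
  once \<open>K T \<le> 1/2\<close>.\<close>

definition state_field :: "real \<Rightarrow> real \<Rightarrow> real \<Rightarrow> real \<Rightarrow> real" where
  "state_field \<gamma> \<beta> u i = - \<beta> * i\<^sup>2 + (\<beta> - \<gamma> - u) * i + u"

definition adjoint_field :: "real \<Rightarrow> real \<Rightarrow> real \<Rightarrow> real \<Rightarrow> real \<Rightarrow> real" where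
  "adjoint_field \<gamma> \<beta> u i l = 2 * \<beta> * i * l - (\<beta> - \<gamma> - u) * l"

lemma has_integral_diff_bound:
  fixes f g :: "real \<Rightarrow> real"
  assumes "(f has_integral I) {a..b}" "(g has_integral J) {a..b}" "a \<le> b"
    and "\<And>x. x \<in> {a..b} \<Longrightarrow> \<bar>f x - g x\<bar> \<le> B"
  shows "\<bar>I - J\<bar> \<le> B * (b - a)"
proof -
  have "0 \<le> B" using assms(3) assms(4)[of a] by force
  then show ?thesis
    using has_integral_bound[of B "\<lambda>x. f x - g x" "I - J" a b] has_integral_diff[OF assms(1,2)] assms(3,4)
    by (simp add: content_real)
qed

lemma continuous_on_if_has_integral_from_left:
  fixes f x :: "real \<Rightarrow> real"
  assumes "\<forall>t\<in>{a..b}. (f has_integral (x t - c)) {a..t}" "a \<le> b"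
  shows "continuous_on {a..b} x"
proof -
  have "f integrable_on {a..b}" using assms by auto
  then have "continuous_on {a..b} (\<lambda>t. c + integral {a..t} f)"
    by (intro continuous_intros indefinite_integral_continuous_1)
  moreover have "c + integral {a..t} f = x t" if "t \<in> {a..b}" for t
    using integral_unique[of f "x t - c" "{a..t}"] assms(1) that by simp
  ultimately show ?thesis using continuous_on_eq by blast
qed

lemma continuous_on_if_has_integral_to_right:
  fixes f y :: "real \<Rightarrow> real"
  assumes "\<forall>t\<in>{a..b}. (f has_integral (c - y t)) {t..b}" "a \<le> b"
  shows "continuous_on {a..b} y"
proof -
  have "f integrable_on {a..b}" using assms by auto
  then have "continuous_on {a..b} (\<lambda>t. c - integral {t..b} f)"
    by (intro continuous_intros indefinite_integral_continuous_1')
  moreover have "c - integral {t..b} f = y t" if "t \<in> {a..b}" for t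
    using integral_unique[of f "c - y t" "{t..b}"] assms(1) that by simp
  ultimately show ?thesis using continuous_on_eq by blast
qed

lemma eq_0_if_bounds_halve:
  fixes h :: "real \<Rightarrow> real"
  assumes "compact S" "continuous_on S h" "\<forall>s\<in>S. 0 \<le> h s"
    and halve: "\<And>D. \<forall>s\<in>S. h s \<le> D \<Longrightarrow> \<forall>s\<in>S. h s \<le> D / 2"
  shows "\<forall>s\<in>S. h s = 0"
proof (cases "S = {}")
  case False
  then obtain t0 where "t0 \<in> S" and max: "\<forall>s\<in>S. h s \<le> h t0"
    using continuous_attains_sup[OF assms(1) _ assms(2)] by blast
  with halve[OF max] assms(3) have "h t0 = 0" by fastforce
  with max assms(3) show ?thesis by fastforce
qed simp

lemma abs_clamp_diff_le:
  fixes a c U :: real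
  shows "\<bar>min (max a 0) U - min (max c 0) U\<bar> \<le> \<bar>a - c\<bar>"
  by (auto simp: min_def max_def)

lemma state_field_lipschitz:
  fixes \<beta> M \<gamma> umax i1 i2 u1 u2 :: real
  assumes "0 \<le> \<beta>" "\<beta> \<le> M" "0 \<le> \<gamma>" "0 \<le> i1" "i1 \<le> 1" "0 \<le> i2" "i2 \<le> 1"
    and "0 \<le> u2" "u2 \<le> umax"
  shows "\<bar>state_field \<gamma> \<beta> u1 i1 - state_field \<gamma> \<beta> u2 i2\<bar>
     \<le> (3 * M + \<gamma> + umax) * \<bar>i1 - i2\<bar> + 2 * \<bar>u1 - u2\<bar>"
proof -
  have "\<beta> * (i1 + i2) \<le> \<beta> * 2" using assms by (intro mult_left_mono) auto
  then have quadratic: "\<bar>\<beta> * (i1 + i2) * (i1 - i2)\<bar> \<le> 2 * M * \<bar>i1 - i2\<bar>"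
    unfolding abs_mult using assms by (intro mult_right_mono) auto
  have linear: "\<bar>(\<beta> - \<gamma>) * (i1 - i2)\<bar> \<le> (M + \<gamma>) * \<bar>i1 - i2\<bar>"
    unfolding abs_mult using assms by (intro mult_right_mono) auto
  have control: "\<bar>(u1 - u2) * i1\<bar> \<le> \<bar>u1 - u2\<bar>"
    unfolding abs_mult using assms by (simp add: mult_left_le)
  have recruitment: "\<bar>u2 * (i1 - i2)\<bar> \<le> umax * \<bar>i1 - i2\<bar>"
    unfolding abs_mult using assms by (intro mult_right_mono) auto
  have triangle: "\<bar>- x + y - z - w + v\<bar> \<le> \<bar>x\<bar> + \<bar>y\<bar> + \<bar>z\<bar> + \<bar>w\<bar> + \<bar>v\<bar>"
    for x y z w v :: real
    by linarith
  have "\<bar>state_field \<gamma> \<beta> u1 i1 - state_field \<gamma> \<beta> u2 i2\<bar>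
    = \<bar>- (\<beta> * (i1 + i2) * (i1 - i2)) + (\<beta> - \<gamma>) * (i1 - i2) - (u1 - u2) * i1
       - u2 * (i1 - i2) + (u1 - u2)\<bar>"
    by (simp add: state_field_def algebra_simps power2_eq_square)
  also have "\<dots> \<le> \<bar>\<beta> * (i1 + i2) * (i1 - i2)\<bar> + \<bar>(\<beta> - \<gamma>) * (i1 - i2)\<bar> + \<bar>(u1 - u2) * i1\<bar>
      + \<bar>u2 * (i1 - i2)\<bar> + \<bar>u1 - u2\<bar>"
    by (rule triangle)
  also have "\<dots> \<le> 2 * M * \<bar>i1 - i2\<bar> + (M + \<gamma>) * \<bar>i1 - i2\<bar> + \<bar>u1 - u2\<bar>
      + umax * \<bar>i1 - i2\<bar> + \<bar>u1 - u2\<bar>"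
    by (intro add_mono order_refl quadratic linear control recruitment)
  also have "\<dots> = (3 * M + \<gamma> + umax) * \<bar>i1 - i2\<bar> + 2 * \<bar>u1 - u2\<bar>"
    by (simp add: algebra_simps)
  finally show ?thesis .
qed

lemma abs_adjoint_field_le:
  fixes \<beta> M \<gamma> umax i u l :: real
  assumes "0 \<le> \<beta>" "\<beta> \<le> M" "0 \<le> \<gamma>" "0 \<le> i" "i \<le> 1" "0 \<le> u" "u \<le> umax"
  shows "\<bar>adjoint_field \<gamma> \<beta> u i l\<bar> \<le> (3 * M + \<gamma> + umax) * \<bar>l\<bar>"
proof -
  have "0 \<le> \<beta> * i" "\<beta> * i \<le> \<beta>" using assms mult_left_le[of i \<beta>] by auto
  then have "\<bar>2 * \<beta> * i - \<beta> + \<gamma> + u\<bar> \<le> 3 * M + \<gamma> + umax"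
    using assms unfolding abs_le_iff by linarith
  moreover have "adjoint_field \<gamma> \<beta> u i l = (2 * \<beta> * i - \<beta> + \<gamma> + u) * l"
    by (simp add: adjoint_field_def algebra_simps)
  ultimately show ?thesis by (simp add: abs_mult mult_right_mono)
qed

text \<open>The adjoint field is linear in \<open>l\<close>, so only the coefficient difference
  \<open>(2 \<beta> (i\<^sub>1 - i\<^sub>2) + (u\<^sub>1 - u\<^sub>2)) l\<^sub>2\<close> needs a bound on \<open>l\<^sub>2\<close>.\<close>
lemma adjoint_field_lipschitz:
  fixes \<beta> M \<gamma> umax i1 i2 u1 u2 l1 l2 :: real
  assumes "0 \<le> \<beta>" "\<beta> \<le> M" "0 \<le> \<gamma>" "0 \<le> i1" "i1 \<le> 1" "0 \<le> u1" "u1 \<le> umax"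
    and "\<bar>l2\<bar> \<le> 2"
  shows "\<bar>adjoint_field \<gamma> \<beta> u1 i1 l1 - adjoint_field \<gamma> \<beta> u2 i2 l2\<bar>
     \<le> (3 * M + \<gamma> + umax) * \<bar>l1 - l2\<bar> + 4 * M * \<bar>i1 - i2\<bar> + 2 * \<bar>u1 - u2\<bar>"
proof -
  have adjoint: "\<bar>adjoint_field \<gamma> \<beta> u1 i1 (l1 - l2)\<bar> \<le> (3 * M + \<gamma> + umax) * \<bar>l1 - l2\<bar>"
    using abs_adjoint_field_le assms by blast
  have state: "\<bar>2 * \<beta> * (i1 - i2) * l2\<bar> \<le> 4 * M * \<bar>i1 - i2\<bar>"
    unfolding abs_mult using assms mult_mono[of "2 * \<bar>\<beta>\<bar> * \<bar>i1 - i2\<bar>" "2 * M * \<bar>i1 - i2\<bar>" "\<bar>l2\<bar>" 2]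
    by (simp add: mult_right_mono)
  have control: "\<bar>(u1 - u2) * l2\<bar> \<le> 2 * \<bar>u1 - u2\<bar>"
    unfolding abs_mult using assms mult_right_mono[of "\<bar>l2\<bar>" 2 "\<bar>u1 - u2\<bar>"]
    by (simp add: mult.commute)
  have "\<bar>adjoint_field \<gamma> \<beta> u1 i1 l1 - adjoint_field \<gamma> \<beta> u2 i2 l2\<bar>
    = \<bar>adjoint_field \<gamma> \<beta> u1 i1 (l1 - l2) + 2 * \<beta> * (i1 - i2) * l2 + (u1 - u2) * l2\<bar>"
    by (simp add: adjoint_field_def algebra_simps)
  also have "\<dots> \<le> \<bar>adjoint_field \<gamma> \<beta> u1 i1 (l1 - l2)\<bar> + \<bar>2 * \<beta> * (i1 - i2) * l2\<bar>
      + \<bar>(u1 - u2) * l2\<bar>"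
    by (rule order_trans[OF abs_triangle_ineq add_mono[OF abs_triangle_ineq order_refl]])
  also have "\<dots> \<le> (3 * M + \<gamma> + umax) * \<bar>l1 - l2\<bar> + 4 * M * \<bar>i1 - i2\<bar> + 2 * \<bar>u1 - u2\<bar>"
    by (intro add_mono adjoint state control)
  finally show ?thesis .
qed

lemma control_law_lipschitz:
  fixes b umax i1 i2 l1 l2 :: real
  assumes "0 < b" "0 \<le> i1" "i1 \<le> 1" "\<bar>l2\<bar> \<le> 2"
  shows "\<bar>min (max (l1 * (1 - i1) / (2 * b)) 0) umax - min (max (l2 * (1 - i2) / (2 * b)) 0) umax\<bar>
     \<le> (\<bar>l1 - l2\<bar> + 2 * \<bar>i1 - i2\<bar>) / (2 * b)"
proof -
  have "\<bar>(l1 - l2) * (1 - i1)\<bar> \<le> \<bar>l1 - l2\<bar>"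
    unfolding abs_mult using assms by (simp add: mult_left_le)
  moreover have "\<bar>l2 * (i1 - i2)\<bar> \<le> 2 * \<bar>i1 - i2\<bar>"
    unfolding abs_mult using assms by (intro mult_right_mono) auto
  moreover have "l1 * (1 - i1) - l2 * (1 - i2) = (l1 - l2) * (1 - i1) - l2 * (i1 - i2)"
    by (simp add: algebra_simps)
  ultimately have "\<bar>l1 * (1 - i1) - l2 * (1 - i2)\<bar> \<le> \<bar>l1 - l2\<bar> + 2 * \<bar>i1 - i2\<bar>"
    by linarith
  then have "\<bar>l1 * (1 - i1) / (2 * b) - l2 * (1 - i2) / (2 * b)\<bar> \<le> (\<bar>l1 - l2\<bar> + 2 * \<bar>i1 - i2\<bar>) / (2 * b)"
    using assms by (simp add: diff_divide_distrib[symmetric] abs_div divide_right_mono)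
  then show ?thesis using abs_clamp_diff_le order_trans by blast
qed

lemma optimality_systemD:
  assumes "optimality_system \<gamma> b umax i0 \<beta> T i lam u" "umax > 0"
  shows "\<forall>t\<in>{0..T}. u t = min (max (lam t * (1 - i t) / (2 * b)) 0) umax"
    and "\<forall>t\<in>{0..T}. 0 \<le> i t \<and> i t \<le> 1"
    and "\<forall>t\<in>{0..T}. 0 \<le> u t \<and> u t \<le> umax"
    and "\<forall>t\<in>{0..T}. ((\<lambda>s. state_field \<gamma> (\<beta> s) (u s) (i s)) has_integral (i t - i0)) {0..t}"
    and "\<forall>t\<in>{0..T}. ((\<lambda>s. adjoint_field \<gamma> (\<beta> s) (u s) (i s) (lam s)) has_integral (1 - lam t)) {t..T}"
  using assms unfolding optimality_system_def state_field_def adjoint_field_def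
  by (simp_all add: min_le_iff_disj)

text \<open>The terminal condition \<open>\<lambda>(T) = 1\<close> keeps the adjoint within a factor 2 of it when
  \<open>T\<close> is small, which makes the control law and the adjoint field uniformly Lipschitz.\<close>
lemma optimality_system_adjoint_bound:
  fixes \<gamma> b umax i0 M T :: real and \<beta> :: "real \<Rightarrow> real"
  assumes "\<gamma> > 0" "umax > 0" "\<And>t. 0 \<le> \<beta> t" "\<And>t. \<beta> t \<le> M"
    and "0 < T" and small: "(3 * M + \<gamma> + umax) * T \<le> 1/2"
    and S: "optimality_system \<gamma> b umax i0 \<beta> T i lam u"
  shows "\<forall>t\<in>{0..T}. \<bar>lam t\<bar> \<le> 2"
proof -
  define c where "c = 3 * M + \<gamma> + umax"
  note sys = optimality_systemD[OF S \<open>umax > 0\<close>]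
  have c0: "0 \<le> c" unfolding c_def using assms(1-4) order_trans[OF assms(3,4)] by force
  have "continuous_on {0..T} lam"
    using continuous_on_if_has_integral_to_right[OF sys(5)] \<open>0 < T\<close> by simp
  then have "continuous_on {0..T} (\<lambda>t. \<bar>lam t\<bar>)"
    by (intro continuous_intros)
  then obtain t0 where t0: "t0 \<in> {0..T}" and max: "\<forall>s\<in>{0..T}. \<bar>lam s\<bar> \<le> \<bar>lam t0\<bar>"
    using continuous_attains_sup[of "{0..T}" "\<lambda>t. \<bar>lam t\<bar>"] \<open>0 < T\<close> by auto
  have "\<bar>adjoint_field \<gamma> (\<beta> s) (u s) (i s) (lam s) - 0\<bar> \<le> c * \<bar>lam t0\<bar>" if "s \<in> {t0..T}" for s
  proof -
    have "s \<in> {0..T}" using that t0 by auto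
    then have "\<bar>adjoint_field \<gamma> (\<beta> s) (u s) (i s) (lam s)\<bar> \<le> c * \<bar>lam s\<bar>"
      unfolding c_def using abs_adjoint_field_le assms(1,3,4) sys(2,3) by (meson less_imp_le)
    also have "\<dots> \<le> c * \<bar>lam t0\<bar>" using max \<open>s \<in> {0..T}\<close> c0 by (simp add: mult_left_mono)
    finally show ?thesis by simp
  qed
  then have "\<bar>1 - lam t0\<bar> \<le> c * \<bar>lam t0\<bar> * (T - t0)"
    using has_integral_diff_bound[OF sys(5)[rule_format, OF t0] has_integral_0] t0 by auto
  also have "\<dots> \<le> c * \<bar>lam t0\<bar> * T" using t0 c0 by (intro mult_left_mono) auto
  also have "\<dots> \<le> \<bar>lam t0\<bar> / 2"
    using mult_right_mono[OF small, of "\<bar>lam t0\<bar>"] unfolding c_def by (simp add: mult_ac)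
  finally have "\<bar>lam t0\<bar> \<le> 2" by linarith
  then show ?thesis using max by fastforce
qed

context
  fixes \<gamma> b umax i0 M T :: real and \<beta> i1 lam1 u1 i2 lam2 u2 :: "real \<Rightarrow> real"
  assumes parameters: "\<gamma> > 0" "b > 0" "umax > 0"
    and \<beta>_bounds: "\<And>t. 0 \<le> \<beta> t" "\<And>t. \<beta> t \<le> M"
    and S1: "optimality_system \<gamma> b umax i0 \<beta> T i1 lam1 u1"
    and S2: "optimality_system \<gamma> b umax i0 \<beta> T i2 lam2 u2"
    and lam2_bound: "\<forall>t\<in>{0..T}. \<bar>lam2 t\<bar> \<le> 2"
begin

lemma control_diff_le:
  assumes D: "\<forall>s\<in>{0..T}. \<bar>i1 s - i2 s\<bar> + \<bar>lam1 s - lam2 s\<bar> \<le> D" and s: "s \<in> {0..T}"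
  shows "\<bar>u1 s - u2 s\<bar> \<le> D / b"
proof -
  have "u1 s = min (max (lam1 s * (1 - i1 s) / (2 * b)) 0) umax"
    "u2 s = min (max (lam2 s * (1 - i2 s) / (2 * b)) 0) umax"
    "0 \<le> i1 s" "i1 s \<le> 1" "\<bar>lam2 s\<bar> \<le> 2"
    using s optimality_systemD(1,2)[OF S1 parameters(3)] optimality_systemD(1)[OF S2 parameters(3)]
      lam2_bound
    by auto
  then have "\<bar>u1 s - u2 s\<bar> \<le> (\<bar>lam1 s - lam2 s\<bar> + 2 * \<bar>i1 s - i2 s\<bar>) / (2 * b)"
    using control_law_lipschitz parameters(2) by presburger
  also have "\<dots> \<le> (2 * D) / (2 * b)"
  proof (rule divide_right_mono)
    have "\<bar>i1 s - i2 s\<bar> + \<bar>lam1 s - lam2 s\<bar> \<le> D" using D s by blast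
    moreover have "\<bar>i1 s - i2 s\<bar> \<le> D" using D s abs_ge_zero[of "lam1 s - lam2 s"] by force
    ultimately show "\<bar>lam1 s - lam2 s\<bar> + 2 * \<bar>i1 s - i2 s\<bar> \<le> 2 * D" by simp
  qed (use parameters(2) in simp)
  finally show ?thesis using parameters(2) by simp
qed

lemma state_diff_le:
  assumes D: "\<forall>s\<in>{0..T}. \<bar>i1 s - i2 s\<bar> + \<bar>lam1 s - lam2 s\<bar> \<le> D" and t: "t \<in> {0..T}"
  shows "\<bar>i1 t - i2 t\<bar> \<le> ((3 * M + \<gamma> + umax) * D + 2 * (D / b)) * t"
proof -
  note sys1 = optimality_systemD[OF S1 parameters(3)] and sys2 = optimality_systemD[OF S2 parameters(3)]
  have "\<bar>state_field \<gamma> (\<beta> s) (u1 s) (i1 s) - state_field \<gamma> (\<beta> s) (u2 s) (i2 s)\<bar>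
      \<le> (3 * M + \<gamma> + umax) * D + 2 * (D / b)" if "s \<in> {0..t}" for s
  proof -
    have s: "s \<in> {0..T}" using that t by auto
    have "\<bar>u1 s - u2 s\<bar> \<le> D / b" by (rule control_diff_le[OF D s])
    moreover have "0 \<le> 3 * M + \<gamma> + umax"
      using parameters \<beta>_bounds order_trans[OF \<beta>_bounds] by force
    moreover have "\<bar>i1 s - i2 s\<bar> \<le> D" using D s by force
    moreover have "\<bar>state_field \<gamma> (\<beta> s) (u1 s) (i1 s) - state_field \<gamma> (\<beta> s) (u2 s) (i2 s)\<bar>
        \<le> (3 * M + \<gamma> + umax) * \<bar>i1 s - i2 s\<bar> + 2 * \<bar>u1 s - u2 s\<bar>"
      using s sys1(2) sys2(2,3) parameters(1) \<beta>_bounds by (intro state_field_lipschitz) auto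
    ultimately show ?thesis by (smt (verit) mult_left_mono)
  qed
  then have "\<bar>(i1 t - i0) - (i2 t - i0)\<bar> \<le> ((3 * M + \<gamma> + umax) * D + 2 * (D / b)) * (t - 0)"
    using has_integral_diff_bound[OF sys1(4)[rule_format, OF t] sys2(4)[rule_format, OF t]] t
    by auto
  then show ?thesis by simp
qed

lemma adjoint_diff_le:
  assumes D: "\<forall>s\<in>{0..T}. \<bar>i1 s - i2 s\<bar> + \<bar>lam1 s - lam2 s\<bar> \<le> D" and t: "t \<in> {0..T}"
  shows "\<bar>lam1 t - lam2 t\<bar> \<le> ((3 * M + \<gamma> + umax) * D + 4 * M * D + 2 * (D / b)) * (T - t)"
proof -
  note sys1 = optimality_systemD[OF S1 parameters(3)] and sys2 = optimality_systemD[OF S2 parameters(3)]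
  have "\<bar>adjoint_field \<gamma> (\<beta> s) (u1 s) (i1 s) (lam1 s) - adjoint_field \<gamma> (\<beta> s) (u2 s) (i2 s) (lam2 s)\<bar>
      \<le> (3 * M + \<gamma> + umax) * D + 4 * M * D + 2 * (D / b)" if "s \<in> {t..T}" for s
  proof -
    have s: "s \<in> {0..T}" using that t by auto
    have "\<bar>u1 s - u2 s\<bar> \<le> D / b" by (rule control_diff_le[OF D s])
    moreover have "0 \<le> M" using order_trans[OF \<beta>_bounds] by blast
    moreover have "0 \<le> 3 * M + \<gamma> + umax" using \<open>0 \<le> M\<close> parameters by simp
    moreover have "\<bar>i1 s - i2 s\<bar> \<le> D" "\<bar>lam1 s - lam2 s\<bar> \<le> D" using D s by force+
    moreover have "\<bar>adjoint_field \<gamma> (\<beta> s) (u1 s) (i1 s) (lam1 s) - adjoint_field \<gamma> (\<beta> s) (u2 s) (i2 s) (lam2 s)\<bar>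
        \<le> (3 * M + \<gamma> + umax) * \<bar>lam1 s - lam2 s\<bar> + 4 * M * \<bar>i1 s - i2 s\<bar> + 2 * \<bar>u1 s - u2 s\<bar>"
      using s sys1(2,3) lam2_bound parameters(1) \<beta>_bounds by (intro adjoint_field_lipschitz) auto
    ultimately show ?thesis by (smt (verit) mult_left_mono)
  qed
  then have "\<bar>(1 - lam1 t) - (1 - lam2 t)\<bar> \<le> ((3 * M + \<gamma> + umax) * D + 4 * M * D + 2 * (D / b)) * (T - t)"
    using has_integral_diff_bound[OF sys1(5)[rule_format, OF t] sys2(5)[rule_format, OF t]] t
    by auto
  then show ?thesis by (simp add: abs_minus_commute)
qed

end

lemma optimality_system_unique:
  fixes \<gamma> b umax i0 M T :: real and \<beta> i1 lam1 u1 i2 lam2 u2 :: "real \<Rightarrow> real"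
  assumes parameters: "\<gamma> > 0" "b > 0" "umax > 0"
    and \<beta>_bounds: "\<And>t. 0 \<le> \<beta> t" "\<And>t. \<beta> t \<le> M"
    and "0 < T" and small: "(2 * (3 * M + \<gamma> + umax) + 4 * M + 4 / b) * T \<le> 1/2"
    and S1: "optimality_system \<gamma> b umax i0 \<beta> T i1 lam1 u1"
    and S2: "optimality_system \<gamma> b umax i0 \<beta> T i2 lam2 u2"
  shows "\<forall>t\<in>{0..T}. i1 t = i2 t \<and> lam1 t = lam2 t \<and> u1 t = u2 t"
proof -
  define c where "c = 3 * M + \<gamma> + umax"
  define K where "K = 2 * c + 4 * M + 4 / b"
  note sys1 = optimality_systemD[OF S1 parameters(3)] and sys2 = optimality_systemD[OF S2 parameters(3)]
  have "0 \<le> M" using order_trans[OF \<beta>_bounds] by blast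
  then have "c * T \<le> K * T"
    unfolding c_def K_def using parameters \<open>0 < T\<close> by (intro mult_right_mono) auto
  then have lam2_bound: "\<forall>t\<in>{0..T}. \<bar>lam2 t\<bar> \<le> 2"
    using optimality_system_adjoint_bound[OF parameters(1,3) \<beta>_bounds \<open>0 < T\<close> _ S2] small
    unfolding c_def K_def by linarith
  have "continuous_on {0..T} (\<lambda>t. \<bar>i1 t - i2 t\<bar> + \<bar>lam1 t - lam2 t\<bar>)"
    using continuous_on_if_has_integral_from_left[OF sys1(4)] continuous_on_if_has_integral_from_left[OF sys2(4)]
      continuous_on_if_has_integral_to_right[OF sys1(5)] continuous_on_if_has_integral_to_right[OF sys2(5)]
      \<open>0 < T\<close>
    by (auto intro!: continuous_intros)
  moreover have "\<forall>t\<in>{0..T}. \<bar>i1 t - i2 t\<bar> + \<bar>lam1 t - lam2 t\<bar> \<le> D / 2"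
    if D: "\<forall>s\<in>{0..T}. \<bar>i1 s - i2 s\<bar> + \<bar>lam1 s - lam2 s\<bar> \<le> D" for D
  proof
    fix t assume t: "t \<in> {0..T}"
    have "0 \<le> D" using D \<open>0 < T\<close> by force
    have "\<bar>i1 t - i2 t\<bar> + \<bar>lam1 t - lam2 t\<bar>
        \<le> (c * D + 2 * (D / b)) * t + (c * D + 4 * M * D + 2 * (D / b)) * (T - t)"
      using state_diff_le[OF parameters \<beta>_bounds S1 S2 lam2_bound D t]
        adjoint_diff_le[OF parameters \<beta>_bounds S1 S2 lam2_bound D t]
      unfolding c_def by linarith
    also have "\<dots> \<le> (c * D + 2 * (D / b)) * T + (c * D + 4 * M * D + 2 * (D / b)) * T"
      using t \<open>0 \<le> D\<close> \<open>0 \<le> M\<close> parameters unfolding c_def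
      by (intro add_mono mult_left_mono) auto
    also have "\<dots> = D * (K * T)"
      unfolding K_def by (simp add: algebra_simps)
    also have "\<dots> \<le> D / 2"
      using mult_left_mono[OF small \<open>0 \<le> D\<close>] unfolding K_def c_def by simp
    finally show "\<bar>i1 t - i2 t\<bar> + \<bar>lam1 t - lam2 t\<bar> \<le> D / 2" .
  qed
  ultimately have "\<forall>t\<in>{0..T}. \<bar>i1 t - i2 t\<bar> + \<bar>lam1 t - lam2 t\<bar> = 0"
    by (intro eq_0_if_bounds_halve) auto
  then show ?thesis using sys1(1) sys2(1) by (smt (verit))
qed

theorem theorem2:
  fixes \<gamma> b umax i0 M :: real and \<beta> :: "real \<Rightarrow> real"
  assumes "\<gamma> > 0" "b > 0" "umax > 0" "0 \<le> i0" "i0 \<le> 1"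
    and "\<beta> \<in> borel_measurable borel"
    and "\<And>t. 0 \<le> \<beta> t" and "\<And>t. \<beta> t \<le> M"
  shows "\<exists>T0>0. \<forall>T. 0 < T \<and> T \<le> T0 \<longrightarrow>
           (\<forall>i1 lam1 u1 i2 lam2 u2.
              optimality_system \<gamma> b umax i0 \<beta> T i1 lam1 u1 \<and>
              optimality_system \<gamma> b umax i0 \<beta> T i2 lam2 u2 \<longrightarrow>
              (\<forall>t\<in>{0..T}. i1 t = i2 t \<and> lam1 t = lam2 t \<and> u1 t = u2 t))"
proof -
  define K where "K = 2 * (3 * M + \<gamma> + umax) + 4 * M + 4 / b"
  have "0 \<le> M" using assms(7,8) order_trans by blast
  then have "0 < K" unfolding K_def using assms(1-3) by (simp add: add_nonneg_pos add_pos_nonneg)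
  moreover have "K * T \<le> 1/2" if "T \<le> 1 / (2 * K)" for T
    using mult_left_mono[OF that, of K] \<open>0 < K\<close> by simp
  ultimately show ?thesis
    unfolding K_def using optimality_system_unique[OF assms(1-3,7,8)]
    by (intro exI[of _ "1 / (2 * K)"]) (auto simp: K_def)
qed

end
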